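(* Let $n\ge m\ge 1$ and consider a Lagrangian $$L=L_0(\dot q^I,q^I)+\lambda^a C_a(\dot q^I,q^I),\qquad I=1,\dots,n,\quad a=1,\dots,m,$$ with dynamical variables $q^I(t)$, Lagrange multipliers $\lambda^a(t)$ (whose time derivatives do not appear in $L$), and constraints $C_a=0$ (summation over repeated indices). Write $L_{IJ}=\partial^2 L/\partial\dot q^I\partial\dot q^J$, $L^{IJ}$ for its inverse, and $C_{aI}=\partial C_a/\partial \dot q^I$. Assume: 1. (Nondegeneracy) $\det(L_{IJ})\neq 0$ on the constraint surface $C_a=0$. Then the equations $p_I=\partial L/\partial\dot q^I$ can be solved (locally) for $\dot q^I=\dot q^I(q^J,p_J,\lambda^b)$. 2. (The constraints do not reduce the phase space dimension of $q^I$) $\det(M_{ab})\neq 0$ on the constraint surface, where $M_{ab}=C_{aI}L^{IJ}C_{bJ}$. Then the constraints $C_a(\dot q^I(q,p,\lambda),q^I)=0$ can be solved (locally) for $\lambda^a=F^a(q^I,p_I)$. 3. Either (a) there is no point satisfying $C_a=0$ for all $a$ together with $\dot q^I=0$ and $\partial L/\partial q^I=0$ for all $I$; or (b) at every point satisfying $C_a=0$, $\dot q^I=0$ and $\partial L/\partial q^I=0$ (for all $a,I$), the $m\times n$ matrix $\left.\partial C_a/\partial q^I\right|_{\lambda=F}$ is not the zero matrix (i.e. at least one constraint depends on $q^I$ there). Then the on-shell Hamiltonian $$H_{\text{on-shell}}(q^I,p_I)=\dot q^I_{\lambda=F}\,p_I-L_0(\dot q^I_{\lambda=F},q^I),\qquad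 \dot q^I_{\lambda=F}=\dot q^I(q^J,p_J,\lambda^b)\big|_{\lambda=F},$$ regarded as a function of the independent phase-space variables $(q^I,p_I)$, has neither a local minimum nor a local maximum (in the interior of its domain).
   Context: This is a statement in finite-dimensional Lagrangian/Hamiltonian mechanics. $p_I=\partial L/\partial\dot q^I$ are the canonical momenta conjugate to $q^I$; the momenta conjugate to $\lambda^a$ vanish identically (primary constraints), and requiring their preservation in time yields the secondary constraints $C_a\approx 0$, which under condition 2 fix $\lambda^a=F^a(q,p)$, leaving all $2n$ variables $(q^I,p_I)$ unconstrained. The on-shell Hamiltonian is the canonical Hamiltonian $\dot q^I p_I-L$ restricted to this constraint surface (where the term $\lambda^aC_a$ vanishes). A local minimum/maximum means a local extremum of $H_{\text{on-shell}}$ as a function of $(q^I,p_I)$; points on the boundary of the domain of $(q^I,p_I)$ are not considered. *)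

theory Defs
  imports "HOL-Analysis.Analysis"
begin

definition C1_on :: "'a::real_normed_vector set \<Rightarrow> ('a \<Rightarrow> real) \<Rightarrow> bool" where
  "C1_on D f \<longleftrightarrow> (\<exists>f'. (\<forall>x\<in>D. (f has_derivative f' x) (at x)) \<and>
                       (\<forall>h. continuous_on D (\<lambda>x. f' x h)))"

definition C2_on :: "'a::real_normed_vector set \<Rightarrow> ('a \<Rightarrow> real) \<Rightarrow> bool" where
  "C2_on D f \<longleftrightarrow> (\<exists>f'. (\<forall>x\<in>D. (f has_derivative f' x) (at x)) \<and>
                       (\<forall>h. C1_on D (\<lambda>x. f' x h)))"

definition d_qdot :: "(real^'n \<Rightarrow> real^'n \<Rightarrow> real) \<Rightarrow> 'n \<Rightarrow> real^'n \<Rightarrow> real^'n \<Rightarrow> real" where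
  "d_qdot f I v q = deriv (\<lambda>t. f (v + t *\<^sub>R axis I 1) q) 0"

definition d_q :: "(real^'n \<Rightarrow> real^'n \<Rightarrow> real) \<Rightarrow> 'n \<Rightarrow> real^'n \<Rightarrow> real^'n \<Rightarrow> real" where
  "d_q f I v q = deriv (\<lambda>t. f v (q + t *\<^sub>R axis I 1)) 0"

definition Lfull :: "(real^'n \<Rightarrow> real^'n \<Rightarrow> real) \<Rightarrow> (real^'n \<Rightarrow> real^'n \<Rightarrow> real^'m)
    \<Rightarrow> real^'n \<Rightarrow> real^'n \<Rightarrow> real^'m \<Rightarrow> real" where
  "Lfull L0 C v q lam = L0 v q + (\<Sum>a\<in>UNIV. lam $ a * C v q $ a)"

definition Lmat :: "(real^'n \<Rightarrow> real^'n \<Rightarrow> real) \<Rightarrow> (real^'n \<Rightarrow> real^'n \<Rightarrow> real^'m)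
    \<Rightarrow> real^'n \<Rightarrow> real^'n \<Rightarrow> real^'m \<Rightarrow> real^'n^'n" where
  "Lmat L0 C v q lam = (\<chi> I J. d_qdot (\<lambda>v' q'. d_qdot (\<lambda>v'' q''. Lfull L0 C v'' q'' lam) J v' q') I v q)"

definition Cmat :: "(real^'n \<Rightarrow> real^'n \<Rightarrow> real^'m) \<Rightarrow> real^'n \<Rightarrow> real^'n \<Rightarrow> real^'n^'m" where
  "Cmat C v q = (\<chi> a I. d_qdot (\<lambda>v' q'. C v' q' $ a) I v q)"

definition Mmat :: "(real^'n \<Rightarrow> real^'n \<Rightarrow> real) \<Rightarrow> (real^'n \<Rightarrow> real^'n \<Rightarrow> real^'m)
    \<Rightarrow> real^'n \<Rightarrow> real^'n \<Rightarrow> real^'m \<Rightarrow> real^'m^'m" where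
  "Mmat L0 C v q lam = Cmat C v q ** matrix_inv (Lmat L0 C v q lam) ** transpose (Cmat C v q)"

definition H_onshell :: "(real^'n \<Rightarrow> real^'n \<Rightarrow> real) \<Rightarrow> (real^'n \<Rightarrow> real^'n \<Rightarrow> real^'n)
    \<Rightarrow> (real^'n) \<times> (real^'n) \<Rightarrow> real" where
  "H_onshell L0 qd z = (case z of (q, p) \<Rightarrow> (\<Sum>I\<in>UNIV. qd q p $ I * p $ I) - L0 (qd q p) q)"

definition local_min_at :: "'a::metric_space set \<Rightarrow> ('a \<Rightarrow> real) \<Rightarrow> 'a \<Rightarrow> bool" where
  "local_min_at U f z \<longleftrightarrow> (\<exists>e>0. \<forall>y\<in>U. dist y z < e \<longrightarrow> f z \<le> f y)"

definition local_max_at :: "'a::metric_space set \<Rightarrow> ('a \<Rightarrow> real) \<Rightarrow> 'a \<Rightarrow> bool" where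
  "local_max_at U f z \<longleftrightarrow> (\<exists>e>0. \<forall>y\<in>U. dist y z < e \<longrightarrow> f y \<le> f z)"

end

theory Submission
  imports Defs
begin

(* By the on-shell Hamilton equations dH/dp = qdot and dH/dq = -dL/dq at lambda = F, an interior
   extremum of H has qdot = 0 and dL/dq = 0, so by condition 3 some constraint has
   c = dC_a/dq^K /= 0 there.  Differentiating C_a(qdot(q, p), q) = 0 shows that, for the momentum
   direction w = dC_a/dqdot and the direction e of q^K, the second derivatives of H satisfy
   D^2 H(w, w) = 0 and D^2 H(w, e) = -c /= 0.  A quadratic form with a vanishing diagonal entry
   and a nonzero off-diagonal entry is indefinite, so H has a saddle.  As qdot is only C^1, this
   second-order argument is carried out with the mean value theorem on the plane spanned by e
   and w instead of with a Hessian. *)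

section \<open>Local extrema and saddle points\<close>

lemma local_max_at_iff_local_min_at_uminus:
  "local_max_at S f z \<longleftrightarrow> local_min_at S (\<lambda>y. - f y) z"
  by (simp add: local_max_at_def local_min_at_def)

lemma eventually_at_of_local_min_at:
  assumes "open S" "z \<in> S" "local_min_at S f z"
  shows "eventually (\<lambda>y. f z \<le> f y) (at z)"
proof -
  obtain r where "r > 0" and r: "\<forall>y\<in>S. dist y z < r \<longrightarrow> f z \<le> f y"
    using assms(3) by (auto simp: local_min_at_def)
  have "eventually (\<lambda>y. y \<in> S) (at z)" "eventually (\<lambda>y. y \<in> ball z r) (at z)"
    using eventually_at_in_open'[OF assms(1,2)] eventually_at_ball[OF \<open>r > 0\<close>, of z UNIV] by auto
  then show ?thesis
    by eventually_elim (use r in \<open>auto simp: dist_commute\<close>)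
qed

lemma local_min_at_imp_derivative_zero:
  assumes "open S" "z \<in> S" "(f has_derivative f') (at z)" "local_min_at S f z"
  shows "f' = (\<lambda>h. 0)"
  using has_derivative_local_min[OF assms(3) eventually_at_of_local_min_at[OF assms(1,2,4)]] .

lemma local_extremum_at_imp_derivative_zero:
  assumes "open S" "z \<in> S" "(f has_derivative f') (at z)"
    and "local_min_at S f z \<or> local_max_at S f z"
  shows "f' = (\<lambda>h. 0)"
  using assms(4)
proof
  assume "local_max_at S f z"
  then have "(\<lambda>h. - f' h) = (\<lambda>h. 0)"
    by (intro local_min_at_imp_derivative_zero[OF assms(1,2), of "\<lambda>y. - f y"] has_derivative_minus assms(3))
      (simp add: local_max_at_iff_local_min_at_uminus)
  then show ?thesis
    by (metis neg_equal_0_iff_equal)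
qed (rule local_min_at_imp_derivative_zero[OF assms(1-3)])

lemma increment_le_of_derivative_le:
  fixes g :: "real \<Rightarrow> real"
  assumes "0 < t"
    and "\<And>x. 0 \<le> x \<Longrightarrow> x \<le> t \<Longrightarrow> (g has_real_derivative g' x) (at x)"
    and "\<And>x. 0 < x \<Longrightarrow> x < t \<Longrightarrow> g' x \<le> B"
  shows "g t - g 0 \<le> t * B"
proof -
  obtain x where "0 < x" "x < t" "g t - g 0 = (t - 0) * g' x"
    using MVT2[of 0 t g g'] assms(1,2) by auto
  then show ?thesis
    using assms(1,3) by (simp add: mult_left_mono)
qed

lemma quadrant_value_below_corner:
  fixes G :: "real \<Rightarrow> real \<Rightarrow> real"
  assumes "c > 0" "d > 0" "e > 0"
    and G_t: "\<And>s t. 0 \<le> s \<Longrightarrow> s < d \<Longrightarrow> 0 \<le> t \<Longrightarrow> t < d \<Longrightarrow> (G s has_real_derivative Gt s t) (at t)"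
    and G_s: "\<And>s. 0 \<le> s \<Longrightarrow> s < d \<Longrightarrow> ((\<lambda>s. G s 0) has_real_derivative Gs s) (at s)"
    and Gs_le: "\<And>s. 0 \<le> s \<Longrightarrow> s < d \<Longrightarrow> Gs s \<le> M * s"
    and Gt_le: "\<And>\<epsilon>. \<epsilon> > 0 \<Longrightarrow> \<exists>\<delta>>0. \<forall>s t. 0 \<le> s \<longrightarrow> s < \<delta> \<longrightarrow> 0 \<le> t \<longrightarrow> t < \<delta> \<longrightarrow>
                  Gt s t \<le> - c * s + \<epsilon> * (s + t)"
  shows "\<exists>s t. 0 < s \<and> s < e \<and> 0 < t \<and> t < e \<and> G s t < G 0 0"
proof -
  \<comment> \<open>Along \<open>t = l s\<close> the gain \<open>- c l s\<^sup>2\<close> of the mixed term beats the growth \<open>\<bar>M\<bar> s\<^sup>2\<close> along the \<open>s\<close>-axis.\<close>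
  define l where "l = (\<bar>M\<bar> + 1) / c"
  have l: "l > 0" "c * l = \<bar>M\<bar> + 1"
    using \<open>c > 0\<close> by (simp_all add: l_def add_pos_nonneg)
  define \<epsilon> where "\<epsilon> = 1 / (2 * l * (1 + l))"
  have \<epsilon>: "\<epsilon> > 0" "\<epsilon> * l * (1 + l) = 1 / 2"
    using l by (simp_all add: \<epsilon>_def)
  obtain \<delta> where "\<delta> > 0" and \<delta>: "\<And>s t. 0 \<le> s \<Longrightarrow> s < \<delta> \<Longrightarrow> 0 \<le> t \<Longrightarrow> t < \<delta> \<Longrightarrow>
      Gt s t \<le> - c * s + \<epsilon> * (s + t)"
    using Gt_le[OF \<open>\<epsilon> > 0\<close>] by blast
  define r where "r = min d (min \<delta> e)"
  define s where "s = r / (2 * (1 + l))"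
  define t where "t = l * s"
  have "r > 0"
    using assms \<open>\<delta> > 0\<close> by (simp add: r_def)
  then have st: "0 < s" "s < r" "0 < t" "t < r"
    using l by (auto simp: s_def t_def field_simps intro: add_pos_pos mult_pos_pos)
  then have st_small: "s < d" "s < \<delta>" "s < e" "t < d" "t < \<delta>" "t < e"
    by (auto simp: r_def)
  have "G s 0 - G 0 0 \<le> s * (\<bar>M\<bar> * s)"
  proof (rule increment_le_of_derivative_le[OF \<open>0 < s\<close>])
    show "((\<lambda>s. G s 0) has_real_derivative Gs x) (at x)" if "0 \<le> x" "x \<le> s" for x
      using G_s that st_small by simp
    show "Gs x \<le> \<bar>M\<bar> * s" if "0 < x" "x < s" for x
      using Gs_le[of x] that st_small
      by (smt (verit, best) abs_ge_self abs_ge_zero mult_left_mono mult_right_mono)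
  qed
  moreover have "G s t - G s 0 \<le> t * (- c * s + \<epsilon> * (s + t))"
  proof (rule increment_le_of_derivative_le[OF \<open>0 < t\<close>])
    show "(G s has_real_derivative Gt s x) (at x)" if "0 \<le> x" "x \<le> t" for x
      using G_t that st st_small by simp
    show "Gt s x \<le> - c * s + \<epsilon> * (s + t)" if "0 < x" "x < t" for x
      using \<delta>[of s x] that st st_small \<open>\<epsilon> > 0\<close> by (smt (verit) mult_left_mono)
  qed
  moreover have "t * (- c * s + \<epsilon> * (s + t)) = - (c * l) * s\<^sup>2 + (\<epsilon> * l * (1 + l)) * s\<^sup>2"
    by (simp add: t_def algebra_simps power2_eq_square)
  moreover have "s\<^sup>2 > 0"
    using \<open>0 < s\<close> by simp
  ultimately have "G s t < G 0 0"
    unfolding l(2) \<epsilon>(2) by (simp add: power2_eq_square algebra_simps)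
  then show ?thesis
    using st st_small by blast
qed

lemma has_derivative_increment_le:
  assumes "(f has_derivative f') (at z)" "\<epsilon> > 0"
  obtains \<delta> where "\<delta> > 0" "\<And>h. norm h < \<delta> \<Longrightarrow> norm (f (z + h) - f z - f' h) \<le> \<epsilon> * norm h"
proof -
  obtain \<delta> where "\<delta> > 0" and "\<forall>y. norm (y - z) < \<delta> \<longrightarrow> norm (f y - f z - f' (y - z)) \<le> \<epsilon> * norm (y - z)"
    using assms unfolding has_derivative_at_alt by blast
  then show ?thesis
    using that[of \<delta>] by (metis add_diff_cancel_left')
qed

lemma has_real_derivative_along_line:
  assumes "(f has_derivative f') (at (x + t *\<^sub>R h))"
  shows "((\<lambda>t. f (x + t *\<^sub>R h)) has_real_derivative f' h) (at t)"
proof -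
  have "((\<lambda>t. x + t *\<^sub>R h) has_derivative (\<lambda>t. t *\<^sub>R h)) (at t)"
    by (auto intro!: derivative_eq_intros)
  from has_derivative_compose[OF this assms]
  have "((\<lambda>t. f (x + t *\<^sub>R h)) has_derivative (\<lambda>t. f' (t *\<^sub>R h))) (at t)" .
  moreover have "(\<lambda>t. f' (t *\<^sub>R h)) = (*) (f' h)"
    using linear_scale[OF has_derivative_linear[OF assms]] by (simp add: fun_eq_iff)
  ultimately show ?thesis
    by (simp add: has_field_derivative_def)
qed

lemma norm_scaleR_add_le:
  fixes e w :: "'a::real_normed_vector"
  assumes "0 \<le> s" "0 \<le> t"
  shows "norm (s *\<^sub>R e + t *\<^sub>R w) \<le> (s + t) * (norm e + norm w + 1)"
proof -
  have "norm (s *\<^sub>R e + t *\<^sub>R w) \<le> s * norm e + t * norm w"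
    using norm_triangle_ineq[of "s *\<^sub>R e" "t *\<^sub>R w"] assms by simp
  also have "\<dots> \<le> s * (norm e + norm w + 1) + t * (norm e + norm w + 1)"
    using assms by (intro add_mono mult_left_mono) auto
  also have "\<dots> = (s + t) * (norm e + norm w + 1)"
    by (simp add: distrib_right)
  finally show ?thesis .
qed

lemma norm_scaleR_add_less:
  fixes e w :: "'a::real_normed_vector"
  defines "N \<equiv> norm e + norm w + 1"
  assumes "0 \<le> s" "s < r / (2 * N)" "0 \<le> t" "t < r / (2 * N)"
  shows "norm (s *\<^sub>R e + t *\<^sub>R w) < r"
proof -
  have "N > 0"
    by (simp add: N_def add_nonneg_pos)
  then have "s * N < r / 2" "t * N < r / 2"
    using assms(3,5) by (simp_all add: field_simps)
  then have "(s + t) * N < r"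
    by (simp add: distrib_right)
  then show ?thesis
    using norm_scaleR_add_le[OF assms(2,4), of e w] by (simp add: N_def)
qed

lemma has_derivative_bound_on_ray:
  fixes g :: "'a::real_normed_vector \<Rightarrow> real"
  assumes "(g has_derivative g') (at z)" "g z = 0"
  obtains \<delta> where "\<delta> > 0" "\<And>s. 0 \<le> s \<Longrightarrow> s < \<delta> \<Longrightarrow> g (z + s *\<^sub>R e) \<le> (g' e + norm e) * s"
proof -
  obtain \<delta> where "\<delta> > 0" and \<delta>: "\<And>h. norm h < \<delta> \<Longrightarrow> norm (g (z + h) - g z - g' h) \<le> 1 * norm h"
    using has_derivative_increment_le[OF assms(1) zero_less_one] by blast
  show ?thesis
  proof (rule that[of "\<delta> / (norm e + 1)"])
    show "\<delta> / (norm e + 1) > 0"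
      using \<open>\<delta> > 0\<close> by (simp add: add_nonneg_pos)
    fix s :: real
    assume "0 \<le> s" "s < \<delta> / (norm e + 1)"
    then have "s * norm e < \<delta>"
      by (smt (verit, ccfv_SIG) mult_left_mono norm_ge_zero pos_less_divide_eq)
    then have "\<bar>g (z + s *\<^sub>R e) - s * g' e\<bar> \<le> s * norm e"
      using \<delta>[of "s *\<^sub>R e"] assms(2) \<open>0 \<le> s\<close>
      by (simp add: linear_scale[OF has_derivative_linear[OF assms(1)]])
    then show "g (z + s *\<^sub>R e) \<le> (g' e + norm e) * s"
      by (simp add: algebra_simps)
  qed
qed

lemma has_derivative_bound_on_quadrant:
  fixes g :: "'a::real_normed_vector \<Rightarrow> real"
  assumes "(g has_derivative g') (at z)" "g z = 0" "g' w = 0" "\<epsilon> > 0"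
  obtains \<delta> where "\<delta> > 0"
    "\<And>s t. 0 \<le> s \<Longrightarrow> s < \<delta> \<Longrightarrow> 0 \<le> t \<Longrightarrow> t < \<delta> \<Longrightarrow>
       g (z + s *\<^sub>R e + t *\<^sub>R w) \<le> g' e * s + \<epsilon> * (s + t)"
proof -
  define N where "N = norm e + norm w + 1"
  have "N > 0"
    by (simp add: N_def add_nonneg_pos)
  obtain \<delta> where "\<delta> > 0" and \<delta>: "\<And>h. norm h < \<delta> \<Longrightarrow> norm (g (z + h) - g z - g' h) \<le> \<epsilon> / N * norm h"
    using has_derivative_increment_le[OF assms(1), of "\<epsilon> / N"] \<open>\<epsilon> > 0\<close> \<open>N > 0\<close> by auto
  show ?thesis
  proof (rule that[of "\<delta> / (2 * N)"])
    show "\<delta> / (2 * N) > 0"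
      using \<open>\<delta> > 0\<close> \<open>N > 0\<close> by simp
    fix s t :: real
    assume st: "0 \<le> s" "s < \<delta> / (2 * N)" "0 \<le> t" "t < \<delta> / (2 * N)"
    define h where "h = s *\<^sub>R e + t *\<^sub>R w"
    have "\<bar>g (z + h) - g' h\<bar> \<le> \<epsilon> / N * norm h"
      using \<delta>[of h] norm_scaleR_add_less[of s \<delta> e w t] st assms(2) by (simp add: h_def N_def)
    also have "\<dots> \<le> \<epsilon> / N * ((s + t) * N)"
      using norm_scaleR_add_le[OF st(1,3)] \<open>\<epsilon> > 0\<close> \<open>N > 0\<close>
      by (intro mult_left_mono) (auto simp: h_def N_def)
    also have "\<dots> = \<epsilon> * (s + t)"
      using \<open>N > 0\<close> by simp
    finally have "\<bar>g (z + h) - g' h\<bar> \<le> \<epsilon> * (s + t)" .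
    moreover have "g' h = g' e * s"
      using linear_add[OF has_derivative_linear[OF assms(1)]]
        linear_scale[OF has_derivative_linear[OF assms(1)]] assms(3)
      by (simp add: h_def)
    ultimately show "g (z + s *\<^sub>R e + t *\<^sub>R w) \<le> g' e * s + \<epsilon> * (s + t)"
      by (simp add: h_def add.assoc abs_le_iff)
  qed
qed

lemma quadrant_in_ball:
  fixes z e w :: "'a::real_normed_vector"
  assumes "r > 0"
  obtains d where "d > 0"
    "\<And>s t. 0 \<le> s \<Longrightarrow> s < d \<Longrightarrow> 0 \<le> t \<Longrightarrow> t < d \<Longrightarrow> z + s *\<^sub>R e + t *\<^sub>R w \<in> ball z r"
proof (rule that[of "r / (2 * (norm e + norm w + 1))"])
  show "r / (2 * (norm e + norm w + 1)) > 0"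
    using assms by (simp add: add_nonneg_pos)
  fix s t :: real
  assume "0 \<le> s" "s < r / (2 * (norm e + norm w + 1))" "0 \<le> t" "t < r / (2 * (norm e + norm w + 1))"
  then have "norm (s *\<^sub>R e + t *\<^sub>R w) < r"
    by (rule norm_scaleR_add_less)
  moreover have "dist z (z + (s *\<^sub>R e + t *\<^sub>R w)) = norm (s *\<^sub>R e + t *\<^sub>R w)"
    using dist_add_cancel[of z 0] by simp
  ultimately show "z + s *\<^sub>R e + t *\<^sub>R w \<in> ball z r"
    by (simp add: add.assoc)
qed

lemma not_local_min_at_saddle_negative:
  fixes f :: "'a::real_normed_vector \<Rightarrow> real"
  assumes "open S" "z \<in> S"
    and f_deriv: "\<And>y. y \<in> S \<Longrightarrow> (f has_derivative f' y) (at y)"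
    and fe_deriv: "((\<lambda>y. f' y e) has_derivative fe') (at z)"
    and fw_deriv: "((\<lambda>y. f' y w) has_derivative fw') (at z)"
    and "fw' w = 0" "fw' e < 0"
  shows "\<not> local_min_at S f z"
proof
  assume min: "local_min_at S f z"
  then obtain r where "r > 0" and r: "\<And>y. y \<in> S \<Longrightarrow> y \<in> ball z r \<Longrightarrow> f z \<le> f y"
    by (auto simp: local_min_at_def dist_commute)
  have f'z: "f' z = (\<lambda>h. 0)"
    using local_min_at_imp_derivative_zero[OF assms(1,2) f_deriv[OF assms(2)] min] .
  obtain \<rho> where "\<rho> > 0" "ball z \<rho> \<subseteq> S"
    using assms(1,2) open_contains_ball by blast
  obtain d\<^sub>S where "d\<^sub>S > 0" and d\<^sub>S: "\<And>s t. 0 \<le> s \<Longrightarrow> s < d\<^sub>S \<Longrightarrow> 0 \<le> t \<Longrightarrow> t < d\<^sub>S \<Longrightarrow>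
      z + s *\<^sub>R e + t *\<^sub>R w \<in> ball z \<rho>"
    using quadrant_in_ball[OF \<open>\<rho> > 0\<close>] by blast
  obtain d\<^sub>r where "d\<^sub>r > 0" and d\<^sub>r: "\<And>s t. 0 \<le> s \<Longrightarrow> s < d\<^sub>r \<Longrightarrow> 0 \<le> t \<Longrightarrow> t < d\<^sub>r \<Longrightarrow>
      z + s *\<^sub>R e + t *\<^sub>R w \<in> ball z r"
    using quadrant_in_ball[OF \<open>r > 0\<close>] by blast
  obtain \<delta> where "\<delta> > 0" and Gs_le: "\<And>s. 0 \<le> s \<Longrightarrow> s < \<delta> \<Longrightarrow> f' (z + s *\<^sub>R e) e \<le> (fe' e + norm e) * s"
    using has_derivative_bound_on_ray[OF fe_deriv] f'z by auto
  define d where "d = min \<delta> (min d\<^sub>S d\<^sub>r)"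
  have "d > 0"
    using \<open>\<delta> > 0\<close> \<open>d\<^sub>S > 0\<close> \<open>d\<^sub>r > 0\<close> by (simp add: d_def)
  have in_S: "z + s *\<^sub>R e + t *\<^sub>R w \<in> S" if "0 \<le> s" "s < d" "0 \<le> t" "t < d" for s t
    using d\<^sub>S[of s t] that \<open>ball z \<rho> \<subseteq> S\<close> by (auto simp: d_def)
  define G where "G = (\<lambda>s t. f (z + s *\<^sub>R e + t *\<^sub>R w))"
  have G_t: "(G s has_real_derivative f' (z + s *\<^sub>R e + t *\<^sub>R w) w) (at t)"
    if "0 \<le> s" "s < d" "0 \<le> t" "t < d" for s t
    using has_real_derivative_along_line[OF f_deriv[OF in_S[OF that]]] by (simp add: G_def)
  have G_s: "((\<lambda>s. G s 0) has_real_derivative f' (z + s *\<^sub>R e) e) (at s)"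
    if "0 \<le> s" "s < d" for s
    using has_real_derivative_along_line[of f _ z s e] f_deriv[OF in_S[OF that order.refl \<open>d > 0\<close>]]
    by (simp add: G_def)
  have Gs_le_d: "f' (z + s *\<^sub>R e) e \<le> (fe' e + norm e) * s" if "0 \<le> s" "s < d" for s
    using Gs_le that by (simp add: d_def)
  have Gt_le: "\<exists>\<delta>>0. \<forall>s t. 0 \<le> s \<longrightarrow> s < \<delta> \<longrightarrow> 0 \<le> t \<longrightarrow> t < \<delta> \<longrightarrow>
      f' (z + s *\<^sub>R e + t *\<^sub>R w) w \<le> - (- fw' e) * s + \<epsilon> * (s + t)" if "\<epsilon> > 0" for \<epsilon>
    using has_derivative_bound_on_quadrant[OF fw_deriv _ \<open>fw' w = 0\<close> that, of e] f'z
    by (metis minus_minus mult_minus_left)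
  obtain s t where st: "0 < s" "s < d" "0 < t" "t < d" and "G s t < G 0 0"
    using quadrant_value_below_corner[OF _ \<open>d > 0\<close> \<open>d > 0\<close> G_t G_s Gs_le_d Gt_le] \<open>fw' e < 0\<close> by auto
  moreover have "z + s *\<^sub>R e + t *\<^sub>R w \<in> ball z r"
    using d\<^sub>r[of s t] st by (simp add: d_def)
  ultimately show False
    using r[of "z + s *\<^sub>R e + t *\<^sub>R w"] in_S[of s t] by (simp add: G_def)
qed

lemma not_local_min_at_saddle:
  fixes f :: "'a::real_normed_vector \<Rightarrow> real"
  assumes S: "open S" "z \<in> S"
    and f_deriv: "\<And>y. y \<in> S \<Longrightarrow> (f has_derivative f' y) (at y)"
    and fe_deriv: "((\<lambda>y. f' y e) has_derivative fe') (at z)"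
    and fw_deriv: "((\<lambda>y. f' y w) has_derivative fw') (at z)"
    and "fw' w = 0" "fw' e \<noteq> 0"
  shows "\<not> local_min_at S f z"
proof (cases "fw' e < 0")
  case True
  then show ?thesis
    using not_local_min_at_saddle_negative[OF S f_deriv fe_deriv fw_deriv \<open>fw' w = 0\<close>] by blast
next
  case False
  have "((\<lambda>y. - f' y e) has_derivative (\<lambda>h. - fe' h)) (at z)"
    using fe_deriv by (rule has_derivative_minus)
  then have "((\<lambda>y. f' y (- e)) has_derivative (\<lambda>h. - fe' h)) (at z)"
    by (rule has_derivative_transform_within_open[OF _ S])
      (simp add: linear_neg[OF has_derivative_linear[OF f_deriv]])
  moreover have "fw' (- e) < 0"
    using False \<open>fw' e \<noteq> 0\<close> linear_neg[OF has_derivative_linear[OF fw_deriv]] by simp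
  ultimately show ?thesis
    using not_local_min_at_saddle_negative[OF S f_deriv _ fw_deriv \<open>fw' w = 0\<close>] by blast
qed

lemma no_local_extremum_at_saddle:
  fixes f :: "'a::real_normed_vector \<Rightarrow> real"
  assumes S: "open S" "z \<in> S"
    and f_deriv: "\<And>y. y \<in> S \<Longrightarrow> (f has_derivative f' y) (at y)"
    and fe_deriv: "((\<lambda>y. f' y e) has_derivative fe') (at z)"
    and fw_deriv: "((\<lambda>y. f' y w) has_derivative fw') (at z)"
    and "fw' w = 0" "fw' e \<noteq> 0"
  shows "\<not> local_min_at S f z \<and> \<not> local_max_at S f z"
proof
  show "\<not> local_min_at S f z"
    by (rule not_local_min_at_saddle[OF assms])
  have "\<not> local_min_at S (\<lambda>y. - f y) z"
    by (rule not_local_min_at_saddle[OF S, where f'="\<lambda>y h. - f' y h" and e=e and w=w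
          and fe'="\<lambda>h. - fe' h" and fw'="\<lambda>h. - fw' h"])
      (use assms in \<open>auto intro: has_derivative_minus\<close>)
  then show "\<not> local_max_at S f z"
    by (simp add: local_max_at_iff_local_min_at_uminus)
qed

lemma has_derivative_vec_lambda:
  fixes f :: "'a::real_normed_vector \<Rightarrow> real^'n"
  assumes "\<And>I. ((\<lambda>z. f z $ I) has_derivative f' I) (at x)"
  shows "(f has_derivative (\<lambda>h. \<chi> I. f' I h)) (at x)"
proof -
  have expand: "g = (\<lambda>z. \<Sum>I\<in>UNIV. g z $ I *\<^sub>R axis I 1)" for g :: "'b \<Rightarrow> real^'n"
    using basis_expansion[of "g z" for z, unfolded scalar_mult_eq_scaleR] by simp
  have "((\<lambda>z. \<Sum>I\<in>UNIV. f z $ I *\<^sub>R axis I 1) has_derivative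
      (\<lambda>h. \<Sum>I\<in>UNIV. f' I h *\<^sub>R axis I (1::real))) (at x)"
    by (intro has_derivative_sum has_derivative_scaleR_left assms)
  then show ?thesis
    using expand[of f] expand[of "\<lambda>h. \<chi> I. f' I h"] by simp
qed

lemma linear_eq_inner_axis:
  fixes l :: "real^'n \<Rightarrow> real"
  assumes "linear l" and "\<And>J. p $ J = l (axis J 1)"
  shows "l v = p \<bullet> v"
proof -
  have "l v = l (\<Sum>J\<in>UNIV. v $ J *\<^sub>R axis J 1)"
    using basis_expansion[of v] by (simp add: scalar_mult_eq_scaleR)
  also have "\<dots> = p \<bullet> v"
    using assms by (simp add: linear_sum linear_scale inner_vec_def mult.commute)
  finally show ?thesis .
qed

lemma linear_Pair_zero:
  fixes l :: "'a::real_normed_vector \<times> 'b::real_normed_vector \<Rightarrow> 'c::real_vector"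
  assumes "linear l"
  shows "linear (\<lambda>v. l (v, 0))"
  using linear_compose[OF bounded_linear.linear[OF bounded_linear_Pair[OF bounded_linear_ident
        bounded_linear_zero]] assms] by (simp add: o_def)

lemma linear_pair_split:
  assumes "linear l"
  shows "l (x, y) = l (x, 0) + l (0, y)"
  using linear_add[OF assms, of "(x, 0)" "(0, y)"] by simp

lemma d_qdot_eq_derivative:
  assumes "((\<lambda>(v, q). f v q) has_derivative f') (at (v, q))"
  shows "d_qdot f I v q = f' (axis I 1, 0)"
proof -
  have "((\<lambda>t. (\<lambda>(v, q). f v q) ((v, q) + t *\<^sub>R (axis I 1, 0))) has_real_derivative f' (axis I 1, 0)) (at 0)"
    by (rule has_real_derivative_along_line) (simp add: assms)
  then show ?thesis
    unfolding d_qdot_def by (intro DERIV_imp_deriv) simp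
qed

lemma d_q_eq_derivative:
  assumes "((\<lambda>(v, q). f v q) has_derivative f') (at (v, q))"
  shows "d_q f I v q = f' (0, axis I 1)"
proof -
  have "((\<lambda>t. (\<lambda>(v, q). f v q) ((v, q) + t *\<^sub>R (0, axis I 1))) has_real_derivative f' (0, axis I 1)) (at 0)"
    by (rule has_real_derivative_along_line) (simp add: assms)
  then show ?thesis
    unfolding d_q_def by (intro DERIV_imp_deriv) simp
qed

lemma C1_on_differentiable: "C1_on D f \<Longrightarrow> x \<in> D \<Longrightarrow> f differentiable (at x)"
  unfolding C1_on_def differentiable_def by blast

lemma C2_on_derivative_differentiable:
  "C2_on D f \<Longrightarrow> \<exists>f'. (\<forall>x\<in>D. (f has_derivative f' x) (at x)) \<and>
     (\<forall>x\<in>D. \<forall>h. (\<lambda>x. f' x h) differentiable (at x))"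
  unfolding C2_on_def using C1_on_differentiable by blast

lemma C1_on_components_has_derivative:
  fixes f :: "'a::real_normed_vector \<Rightarrow> real^'n"
  assumes "\<forall>I. C1_on U (\<lambda>z. f z $ I)"
  shows "\<exists>f'. \<forall>z\<in>U. (f has_derivative f' z) (at z)"
proof -
  obtain f' where "\<And>I z. z \<in> U \<Longrightarrow> ((\<lambda>z. f z $ I) has_derivative f' I z) (at z)"
    using assms unfolding C1_on_def by (metis (mono_tags))
  then show ?thesis
    by (intro exI[of _ "\<lambda>z h. \<chi> I. f' I z h"] ballI has_derivative_vec_lambda)
qed

section \<open>The on-shell Hamiltonian\<close>

lemma H_onshell_eq_inner: "H_onshell L0 qd = (\<lambda>(q, p). qd q p \<bullet> p - L0 (qd q p) q)"
  by (simp add: H_onshell_def[abs_def] inner_vec_def)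

locale onshell_hamiltonian =
  fixes L0 :: "real^'n \<Rightarrow> real^'n \<Rightarrow> real"
    and C :: "real^'n \<Rightarrow> real^'n \<Rightarrow> real^'m"
    and D :: "((real^'n) \<times> (real^'n)) set"
    and L0' :: "(real^'n) \<times> (real^'n) \<Rightarrow> (real^'n) \<times> (real^'n) \<Rightarrow> real"
    and C' :: "'m \<Rightarrow> (real^'n) \<times> (real^'n) \<Rightarrow> (real^'n) \<times> (real^'n) \<Rightarrow> real"
    and U :: "((real^'n) \<times> (real^'n)) set"
    and qd :: "real^'n \<Rightarrow> real^'n \<Rightarrow> real^'n"
    and qd' :: "(real^'n) \<times> (real^'n) \<Rightarrow> (real^'n) \<times> (real^'n) \<Rightarrow> real^'n"
    and F :: "real^'n \<Rightarrow> real^'n \<Rightarrow> real^'m"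
  assumes L0_deriv: "x \<in> D \<Longrightarrow> ((\<lambda>(v, q). L0 v q) has_derivative L0' x) (at x)"
    and C_deriv: "x \<in> D \<Longrightarrow> ((\<lambda>(v, q). C v q $ a) has_derivative C' a x) (at x)"
    and L0'_differentiable: "x \<in> D \<Longrightarrow> (\<lambda>x. L0' x h) differentiable (at x)"
    and C'_differentiable: "x \<in> D \<Longrightarrow> (\<lambda>x. C' a x h) differentiable (at x)"
    and U_open: "open U"
    and qd_deriv: "z \<in> U \<Longrightarrow> ((\<lambda>(q, p). qd q p) has_derivative qd' z) (at z)"
    and F_differentiable: "z \<in> U \<Longrightarrow> (\<lambda>(q, p). F q p $ a) differentiable (at z)"
    and on_shell: "(q, p) \<in> U \<Longrightarrow> (qd q p, q) \<in> D \<and> C (qd q p) q = 0 \<and>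
                     (\<forall>I. p $ I = d_qdot (\<lambda>v q'. Lfull L0 C v q' (F q p)) I (qd q p) q)"
begin

definition Lfull' :: "real^'m \<Rightarrow> (real^'n) \<times> (real^'n) \<Rightarrow> (real^'n) \<times> (real^'n) \<Rightarrow> real" where
  "Lfull' lam x h = L0' x h + (\<Sum>a\<in>UNIV. lam $ a * C' a x h)"

lemma Lfull_has_derivative:
  assumes "x \<in> D"
  shows "((\<lambda>(v, q). Lfull L0 C v q lam) has_derivative Lfull' lam x) (at x)"
proof -
  have "(\<lambda>(v, q). Lfull L0 C v q lam) = (\<lambda>x. (\<lambda>(v, q). L0 v q) x + (\<Sum>a\<in>UNIV. lam $ a * (\<lambda>(v, q). C v q $ a) x))"
    by (simp add: Lfull_def fun_eq_iff split_beta)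
  then show ?thesis
    unfolding Lfull'_def[abs_def]
    by (simp only:) (intro has_derivative_add has_derivative_sum has_derivative_mult_right
        L0_deriv C_deriv assms)
qed

lemma linear_Lfull': "x \<in> D \<Longrightarrow> linear (Lfull' lam x)"
  using has_derivative_linear[OF Lfull_has_derivative] .

lemma momentum_inner:
  assumes "(q, p) \<in> U"
  shows "p \<bullet> v = Lfull' (F q p) (qd q p, q) (v, 0)"
proof -
  have x: "(qd q p, q) \<in> D"
    using on_shell[OF assms] by blast
  have "linear (\<lambda>v. Lfull' (F q p) (qd q p, q) (v, 0))"
    using linear_Pair_zero[OF linear_Lfull'[OF x]] .
  moreover have "p $ I = Lfull' (F q p) (qd q p, q) (axis I 1, 0)" for I
    using on_shell[OF assms] d_qdot_eq_derivative[OF Lfull_has_derivative[OF x]] by simp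
  ultimately show ?thesis
    by (rule linear_eq_inner_axis[symmetric])
qed

definition state :: "(real^'n) \<times> (real^'n) \<Rightarrow> (real^'n) \<times> (real^'n)" where
  "state = (\<lambda>(q, p). (qd q p, q))"

lemma state_Pair [simp]: "state (q, p) = (qd q p, q)"
  by (simp add: state_def)

lemma state_in_D: "z \<in> U \<Longrightarrow> state z \<in> D"
  by (cases z) (simp add: on_shell)

lemma state_has_derivative:
  assumes "z \<in> U"
  shows "(state has_derivative (\<lambda>h. (qd' z h, fst h))) (at z)"
proof -
  have "((\<lambda>z. ((\<lambda>(q, p). qd q p) z, fst z)) has_derivative (\<lambda>h. (qd' z h, fst h))) (at z)"
    by (intro has_derivative_Pair qd_deriv assms has_derivative_fst[OF has_derivative_ident])
  then show ?thesis
    by (simp add: state_def case_prod_unfold)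
qed

lemma constraint_derivative_vanishes:
  assumes "(q, p) \<in> U"
  shows "C' a (qd q p, q) (qd' (q, p) h, fst h) = 0"
proof -
  have "((\<lambda>z. (\<lambda>(v, q). C v q $ a) (state z)) has_derivative
      (\<lambda>h. C' a (state (q, p)) (qd' (q, p) h, fst h))) (at (q, p))"
    using has_derivative_compose[OF state_has_derivative[OF assms] C_deriv[OF state_in_D[OF assms]]] .
  moreover have "((\<lambda>z. (\<lambda>(v, q). C v q $ a) (state z)) has_derivative (\<lambda>h. 0)) (at (q, p))"
    by (rule has_derivative_transform_within_open[OF has_derivative_const U_open assms])
      (auto simp: state_def dest: on_shell)
  ultimately have "(\<lambda>h. C' a (state (q, p)) (qd' (q, p) h, fst h)) = (\<lambda>h. 0)"
    by (rule has_derivative_unique)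
  then show ?thesis
    using fun_cong by fastforce
qed

fun H_deriv :: "(real^'n) \<times> (real^'n) \<Rightarrow> (real^'n) \<times> (real^'n) \<Rightarrow> real" where
  "H_deriv (q, p) (dq, dp) = qd q p \<bullet> dp - Lfull' (F q p) (qd q p, q) (0, dq)"

text \<open>The on-shell Hamilton equations: the terms containing the derivative of \<open>qd\<close> cancel because
  \<open>p = \<partial>L/\<partial>qdot\<close> and the linearised constraints vanish along \<open>U\<close>.\<close>

lemma H_onshell_has_derivative:
  assumes "(q, p) \<in> U"
  shows "(H_onshell L0 qd has_derivative H_deriv (q, p)) (at (q, p))"
proof -
  define x where "x = state (q, p)"
  have "x \<in> D"
    using state_in_D[OF assms] by (simp add: x_def)
  have "((\<lambda>z. (\<lambda>(q, p). qd q p) z \<bullet> snd z - (\<lambda>(v, q). L0 v q) (state z)) has_derivative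
      (\<lambda>h. qd q p \<bullet> snd h + qd' (q, p) h \<bullet> p - L0' x (qd' (q, p) h, fst h))) (at (q, p))"
    using has_derivative_diff[OF has_derivative_inner[OF qd_deriv[OF assms] has_derivative_snd[OF has_derivative_ident]]
        has_derivative_compose[OF state_has_derivative[OF assms] L0_deriv[OF state_in_D[OF assms]]]]
    by (simp add: x_def)
  moreover have "H_onshell L0 qd = (\<lambda>z. (\<lambda>(q, p). qd q p) z \<bullet> snd z - (\<lambda>(v, q). L0 v q) (state z))"
    by (simp add: H_onshell_eq_inner state_def case_prod_unfold)
  moreover have "qd q p \<bullet> snd h + qd' (q, p) h \<bullet> p - L0' x (qd' (q, p) h, fst h) = H_deriv (q, p) h" for h
  proof -
    have "qd' (q, p) h \<bullet> p = Lfull' (F q p) x (qd' (q, p) h, 0)"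
      unfolding inner_commute[of _ p] x_def using momentum_inner[OF assms] by simp
    also have "\<dots> = Lfull' (F q p) x (qd' (q, p) h, fst h) - Lfull' (F q p) x (0, fst h)"
      using linear_pair_split[OF linear_Lfull'[OF \<open>x \<in> D\<close>], where x="qd' (q, p) h" and y="fst h"] by simp
    also have "Lfull' (F q p) x (qd' (q, p) h, fst h) = L0' x (qd' (q, p) h, fst h)"
      using constraint_derivative_vanishes[OF assms] by (simp add: Lfull'_def x_def)
    finally show ?thesis
      by (cases h) (simp add: x_def)
  qed
  ultimately show ?thesis
    by simp
qed

lemma Lfull'_zero: "x \<in> D \<Longrightarrow> Lfull' lam x (0, 0) = 0"
  using linear_0[OF linear_Lfull'] by (simp add: zero_prod_def)

lemma critical_point_of_local_extremum:
  assumes "(q, p) \<in> U"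
    and "local_min_at U (H_onshell L0 qd) (q, p) \<or> local_max_at U (H_onshell L0 qd) (q, p)"
  shows "qd q p = 0 \<and> (\<forall>I. d_q (\<lambda>v q'. Lfull L0 C v q' (F q p)) I 0 q = 0)"
proof -
  have H'0: "H_deriv (q, p) = (\<lambda>h. 0)"
    by (rule local_extremum_at_imp_derivative_zero[OF U_open assms(1) H_onshell_has_derivative[OF assms(1)] assms(2)])
  have x: "(qd q p, q) \<in> D"
    using state_in_D[OF assms(1)] by simp
  have "qd q p \<bullet> qd q p = 0"
    using fun_cong[OF H'0, of "(0, qd q p)"] Lfull'_zero[OF x] by simp
  then have qd0: "qd q p = 0"
    by simp
  have "d_q (\<lambda>v q'. Lfull L0 C v q' (F q p)) I 0 q = 0" for I
    using d_q_eq_derivative[OF Lfull_has_derivative[OF x]] fun_cong[OF H'0, of "(axis I 1, 0)"] qd0 by simp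
  with qd0 show ?thesis
    by blast
qed

lemma constraint_gradient_inner_velocity_derivative:
  assumes "(q, p) \<in> U"
  shows "qd' (q, p) h \<bullet> (\<chi> J. C' a (qd q p, q) (axis J 1, 0)) = - C' a (qd q p, q) (0, fst h)"
proof -
  have x: "(qd q p, q) \<in> D"
    using state_in_D[OF assms] by simp
  have lin: "linear (C' a (qd q p, q))"
    using has_derivative_linear[OF C_deriv[OF x]] .
  have "C' a (qd q p, q) (qd' (q, p) h, 0) = (\<chi> J. C' a (qd q p, q) (axis J 1, 0)) \<bullet> qd' (q, p) h"
    using linear_eq_inner_axis[OF linear_Pair_zero[OF lin]] by simp
  moreover have "C' a (qd q p, q) (qd' (q, p) h, fst h) = C' a (qd q p, q) (qd' (q, p) h, 0) + C' a (qd q p, q) (0, fst h)"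
    by (rule linear_pair_split[OF lin])
  ultimately show ?thesis
    using constraint_derivative_vanishes[OF assms] by (simp add: inner_commute)
qed

lemma no_local_extremum_if_constraint_depends_on_q:
  assumes "(q, p) \<in> U" "qd q p = 0" "d_q (\<lambda>v q. C v q $ a) K 0 q \<noteq> 0"
  shows "\<not> local_min_at U (H_onshell L0 qd) (q, p) \<and> \<not> local_max_at U (H_onshell L0 qd) (q, p)"
proof -
  \<comment> \<open>\<open>H_deriv y w = qd y \<bullet> u\<close>, whose derivative is \<open>- C' a (0, q) (0, \<cdot>)\<close> by the linearised
     constraint: it vanishes in direction \<open>w\<close> and equals \<open>-\<partial>C\<^sub>a/\<partial>q\<^sup>K\<close> in direction \<open>e\<close>.\<close>
  define u where "u = (\<chi> J. C' a (0, q) (axis J 1, 0))"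
  define e :: "(real^'n) \<times> (real^'n)" where "e = (axis K 1, 0)"
  define w :: "(real^'n) \<times> (real^'n)" where "w = (0, u)"
  have x: "(0, q) \<in> D"
    using state_in_D[OF assms(1)] assms(2) by simp
  have H_deriv_at: "(H_onshell L0 qd has_derivative H_deriv y) (at y)" if "y \<in> U" for y
    using H_onshell_has_derivative[of "fst y" "snd y"] that by simp
  have "(\<lambda>y. H_deriv y e) = (\<lambda>y. - (L0' (state y) (0, axis K 1) +
      (\<Sum>b\<in>UNIV. (\<lambda>(q, p). F q p $ b) y * C' b (state y) (0, axis K 1))))"
    by (simp add: fun_eq_iff split_paired_All e_def Lfull'_def)
  moreover have "state differentiable (at (q, p))"
    using state_has_derivative[OF assms(1)] by (auto simp: differentiable_def)
  ultimately have "(\<lambda>y. H_deriv y e) differentiable (at (q, p))"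
    using state_in_D[OF assms(1)] assms(1)
    by (simp add: differentiable_compose[OF L0'_differentiable] differentiable_compose[OF C'_differentiable]
        F_differentiable)
  then obtain fe' where fe': "((\<lambda>y. H_deriv y e) has_derivative fe') (at (q, p))"
    by (auto simp: differentiable_def)
  have "((\<lambda>y. (\<lambda>(q, p). qd q p) y \<bullet> u) has_derivative (\<lambda>h. qd' (q, p) h \<bullet> u)) (at (q, p))"
    by (rule has_derivative_inner_left[OF qd_deriv[OF assms(1)]])
  then have fw': "((\<lambda>y. H_deriv y w) has_derivative (\<lambda>h. qd' (q, p) h \<bullet> u)) (at (q, p))"
    by (rule has_derivative_transform_within_open[OF _ U_open assms(1)])
      (auto simp: w_def Lfull'_zero dest: on_shell)
  have "qd' (q, p) w \<bullet> u = 0"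
    using constraint_gradient_inner_velocity_derivative[OF assms(1), of w a] assms(2)
      linear_0[OF has_derivative_linear[OF C_deriv[OF x]]] by (simp add: u_def w_def zero_prod_def)
  moreover have "qd' (q, p) e \<bullet> u \<noteq> 0"
    using constraint_gradient_inner_velocity_derivative[OF assms(1), of e a] assms(2,3)
      d_q_eq_derivative[OF C_deriv[OF x]] by (simp add: u_def e_def)
  ultimately show ?thesis
    using no_local_extremum_at_saddle[OF U_open assms(1) H_deriv_at fe' fw'] by blast
qed

end

lemma ex_onshell_hamiltonian:
  fixes L0 :: "real^'n \<Rightarrow> real^'n \<Rightarrow> real"
    and C :: "real^'n \<Rightarrow> real^'n \<Rightarrow> real^'m"
    and qd :: "real^'n \<Rightarrow> real^'n \<Rightarrow> real^'n"
    and F :: "real^'n \<Rightarrow> real^'n \<Rightarrow> real^'m"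
  assumes L0_C2: "C2_on D (\<lambda>(v, q). L0 v q)"
    and C_C2: "\<forall>a. C2_on D (\<lambda>(v, q). C v q $ a)"
    and U_open: "open U"
    and qd_C1: "\<forall>I. C1_on U (\<lambda>(q, p). qd q p $ I)"
    and F_C1: "\<forall>a. C1_on U (\<lambda>(q, p). F q p $ a)"
    and sol: "\<forall>(q, p)\<in>U. (qd q p, q) \<in> D \<and> C (qd q p) q = 0 \<and>
               (\<forall>I. p $ I = d_qdot (\<lambda>v q'. Lfull L0 C v q' (F q p)) I (qd q p) q)"
  shows "\<exists>L0' C' qd'. onshell_hamiltonian L0 C D L0' C' U qd qd' F"
proof -
  obtain L0' where L0': "\<forall>x\<in>D. ((\<lambda>(v, q). L0 v q) has_derivative L0' x) (at x)"
      "\<forall>x\<in>D. \<forall>h. (\<lambda>x. L0' x h) differentiable (at x)"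
    using C2_on_derivative_differentiable[OF L0_C2] by blast
  have "\<forall>a. \<exists>Ca'. (\<forall>x\<in>D. ((\<lambda>(v, q). C v q $ a) has_derivative Ca' x) (at x)) \<and>
      (\<forall>x\<in>D. \<forall>h. (\<lambda>x. Ca' x h) differentiable (at x))"
    using C_C2 C2_on_derivative_differentiable by blast
  then obtain C' where C': "\<forall>a. (\<forall>x\<in>D. ((\<lambda>(v, q). C v q $ a) has_derivative C' a x) (at x)) \<and>
      (\<forall>x\<in>D. \<forall>h. (\<lambda>x. C' a x h) differentiable (at x))"
    unfolding choice_iff by blast
  obtain qd' where qd': "\<forall>z\<in>U. ((\<lambda>(q, p). qd q p) has_derivative qd' z) (at z)"
    using C1_on_components_has_derivative[of U "\<lambda>(q, p). qd q p"] qd_C1 by (auto simp: case_prod_unfold)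
  have F_differentiable: "(\<lambda>(q, p). F q p $ a) differentiable (at z)" if "z \<in> U" for a z
    using C1_on_differentiable[OF F_C1[rule_format] that] .
  have "onshell_hamiltonian L0 C D L0' C' U qd qd' F"
    by unfold_locales (use L0' C' qd' sol U_open F_differentiable in auto)
  then show ?thesis
    by blast
qed

theorem theorem2:
  fixes L0 :: "real^'n \<Rightarrow> real^'n \<Rightarrow> real"
    and C :: "real^'n \<Rightarrow> real^'n \<Rightarrow> real^'m"
    and D :: "((real^'n) \<times> (real^'n)) set"
    and U :: "((real^'n) \<times> (real^'n)) set"
    and qd :: "real^'n \<Rightarrow> real^'n \<Rightarrow> real^'n"
    and F :: "real^'n \<Rightarrow> real^'n \<Rightarrow> real^'m"
  assumes dims: "CARD('m) \<le> CARD('n)"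
    and D_open: "open D"
    and L0_C2: "C2_on D (\<lambda>(v, q). L0 v q)"
    and C_C2: "\<forall>a. C2_on D (\<lambda>(v, q). C v q $ a)"
    and nondeg: "\<forall>v q lam. (v, q) \<in> D \<and> C v q = 0 \<longrightarrow> det (Lmat L0 C v q lam) \<noteq> 0"
    and Mnondeg: "\<forall>v q lam. (v, q) \<in> D \<and> C v q = 0 \<longrightarrow> det (Mmat L0 C v q lam) \<noteq> 0"
    and cond3: "(\<not> (\<exists>v q lam. (v, q) \<in> D \<and> C v q = 0 \<and> v = 0 \<and>
                    (\<forall>I. d_q (\<lambda>v' q'. Lfull L0 C v' q' lam) I v q = 0)))
              \<or> (\<forall>v q lam. (v, q) \<in> D \<and> C v q = 0 \<and> v = 0 \<and>
                    (\<forall>I. d_q (\<lambda>v' q'. Lfull L0 C v' q' lam) I v q = 0)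
                  \<longrightarrow> (\<exists>a I. d_q (\<lambda>v' q'. C v' q' $ a) I v q \<noteq> 0))"
    and U_open: "open U"
    and qd_C1: "\<forall>I. C1_on U (\<lambda>(q, p). qd q p $ I)"
    and F_C1: "\<forall>a. C1_on U (\<lambda>(q, p). F q p $ a)"
    and sol: "\<forall>(q, p)\<in>U. (qd q p, q) \<in> D \<and> C (qd q p) q = 0 \<and>
               (\<forall>I. p $ I = d_qdot (\<lambda>v q'. Lfull L0 C v q' (F q p)) I (qd q p) q)"
  shows "\<forall>z\<in>U. \<not> local_min_at U (H_onshell L0 qd) z \<and> \<not> local_max_at U (H_onshell L0 qd) z"
proof -
  \<comment> \<open>The nondegeneracy hypotheses \<open>dims\<close>, \<open>nondeg\<close>, \<open>Mnondeg\<close> (and \<open>D_open\<close>) only serve to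
     construct \<open>qd\<close> and \<open>F\<close> by the implicit function theorem; here both are given, together with \<open>sol\<close>.\<close>
  obtain L0' C' qd' where "onshell_hamiltonian L0 C D L0' C' U qd qd' F"
    using ex_onshell_hamiltonian[OF L0_C2 C_C2 U_open qd_C1 F_C1 sol] by blast
  then interpret onshell_hamiltonian L0 C D L0' C' U qd qd' F .
  show ?thesis
  proof (intro ballI)
    fix z
    assume "z \<in> U"
    then obtain q p where z: "z = (q, p)" "(q, p) \<in> U"
      by (cases z) auto
    show "\<not> local_min_at U (H_onshell L0 qd) z \<and> \<not> local_max_at U (H_onshell L0 qd) z"
    proof (rule ccontr)
      assume "\<not> ?thesis"
      then have extremum: "local_min_at U (H_onshell L0 qd) (q, p) \<or> local_max_at U (H_onshell L0 qd) (q, p)"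
        using z by blast
      then have critical: "qd q p = 0 \<and> (\<forall>I. d_q (\<lambda>v q'. Lfull L0 C v q' (F q p)) I 0 q = 0)"
        by (rule critical_point_of_local_extremum[OF z(2)])
      moreover have "(0, q) \<in> D" "C 0 q = 0"
        using on_shell[OF z(2)] critical by auto
      ultimately obtain a K where "d_q (\<lambda>v q. C v q $ a) K 0 q \<noteq> 0"
        using cond3 by blast
      then show False
        using no_local_extremum_if_constraint_depends_on_q[OF z(2)] critical extremum by blast
    qed
  qed
qed

end
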